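(* Let $(X,\Sigma)$ be a measurable space and $p$ a transition function on it with associated operator $A$. Suppose $A$ has a disjoint countably additive cycle of measures $K=\{\mu_1,\dots,\mu_m\}\subset S_{ca}$. Then there is a system of pairwise disjoint sets $S=\{D_1,\dots,D_m\}$, $D_i\in\Sigma$, such that $\mu_i(D_j)=1$ if $i=j$ and $\mu_i(D_j)=0$ if $i\ne j$, and $p(x,D_{i+1})=1$ for $\mu_i$-almost every $x\in D_i$, $i=1,\dots,m-1$, and $p(x,D_1)=1$ for $\mu_m$-almost every $x\in D_m$ (so $S$ is a singular cycle of sets of states in the $\mu_i$-almost everywhere sense).
   Context: $X$ is an arbitrary infinite set and $\Sigma$ a $\sigma$-algebra of subsets of $X$ containing all one-point sets. $ca(X,\Sigma)$ denotes the bounded countably additive real measures on $\Sigma$ and $S_{ca}=\{\mu\in ca(X,\Sigma):\mu\ge0,\ \mu(X)=1\}$. A transition function is a map $p(x,E)$ with $0\le p(x,E)\le1$, $p(x,X)=1$, $p(\cdot,E)$ bounded $\Sigma$-measurable for every $E\in\Sigma$, and $p(x,\cdot)$ countably additive for every $x\in X$. The Markov operator is $A\mu(E)=\int_X p(x,E)\,\mu(dx)$. A cycle of measures of $A$ is a finite numbered set $\{\mu_1,\dots,\mu_m\}$ of pairwise different positive measures with $A\mu_i=\mu_{i+1}$ ($1\le i\le m-1$), $A\mu_m=\mu_1$. For positive measures, $(\mu\wedge\nu)(E)=\inf\{\mu(C)+\nu(E\setminus C):C\subset E,C\in\Sigma\}$, and $\mu,\nu$ are disjoint if $\mu\wedge\nu=0$;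 a cycle is disjoint if its measures are pairwise disjoint. *)

theory Defs
  imports "HOL-Analysis.Analysis"
begin

definition standing_space :: "'a measure \<Rightarrow> bool" where
  "standing_space M \<longleftrightarrow> infinite (space M) \<and> (\<forall>x\<in>space M. {x} \<in> sets M)"

definition transition_function :: "'a measure \<Rightarrow> ('a \<Rightarrow> 'a set \<Rightarrow> real) \<Rightarrow> bool" where
  "transition_function M p \<longleftrightarrow>
     (\<forall>x\<in>space M. \<forall>E\<in>sets M. 0 \<le> p x E \<and> p x E \<le> 1) \<and>
     (\<forall>x\<in>space M. p x (space M) = 1) \<and>
     (\<forall>E\<in>sets M. (\<lambda>x. p x E) \<in> borel_measurable M) \<and>
     (\<forall>x\<in>space M. countably_additive (sets M) (\<lambda>E. ennreal (p x E)))"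

definition markov_op :: "('a \<Rightarrow> 'a set \<Rightarrow> real) \<Rightarrow> 'a measure \<Rightarrow> 'a set \<Rightarrow> real" where
  "markov_op p \<mu> E = (\<integral>x. p x E \<partial>\<mu>)"

text \<open>S_ca: probability (countably additive, positive, total mass 1) measures on (X, Sigma).\<close>
definition S_ca :: "'a measure \<Rightarrow> 'a measure set" where
  "S_ca M = {\<mu>. sets \<mu> = sets M \<and> emeasure \<mu> (space \<mu>) = 1}"

definition meas_inf :: "'a measure \<Rightarrow> 'a measure \<Rightarrow> 'a measure \<Rightarrow> 'a set \<Rightarrow> real" where
  "meas_inf M \<mu> \<nu> E = (INF C\<in>{C\<in>sets M. C \<subseteq> E}. measure \<mu> C + measure \<nu> (E - C))"

definition meas_disjoint :: "'a measure \<Rightarrow> 'a measure \<Rightarrow> 'a measure \<Rightarrow> bool" where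
  "meas_disjoint M \<mu> \<nu> \<longleftrightarrow> (\<forall>E\<in>sets M. meas_inf M \<mu> \<nu> E = 0)"

definition cyc_next :: "nat \<Rightarrow> nat \<Rightarrow> nat" where
  "cyc_next m i = (if i < m then i + 1 else 1)"

definition is_cycle :: "'a measure \<Rightarrow> ('a \<Rightarrow> 'a set \<Rightarrow> real) \<Rightarrow> nat \<Rightarrow> (nat \<Rightarrow> 'a measure) \<Rightarrow> bool" where
  "is_cycle M p m \<mu> \<longleftrightarrow> m \<ge> 1 \<and>
     (\<forall>i\<in>{1..m}. \<mu> i \<in> S_ca M) \<and>
     (\<forall>i\<in>{1..m}. \<forall>j\<in>{1..m}. i \<noteq> j \<longrightarrow> \<mu> i \<noteq> \<mu> j) \<and>
     (\<forall>i\<in>{1..m}. \<forall>E\<in>sets M. measure (\<mu> (cyc_next m i)) E = markov_op p (\<mu> i) E)"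

definition is_disjoint_cycle :: "'a measure \<Rightarrow> ('a \<Rightarrow> 'a set \<Rightarrow> real) \<Rightarrow> nat \<Rightarrow> (nat \<Rightarrow> 'a measure) \<Rightarrow> bool" where
  "is_disjoint_cycle M p m \<mu> \<longleftrightarrow> is_cycle M p m \<mu> \<and>
     (\<forall>i\<in>{1..m}. \<forall>j\<in>{1..m}. i \<noteq> j \<longrightarrow> meas_disjoint M (\<mu> i) (\<mu> j))"

end

theory Submission
  imports Defs "HOL-Probability.Probability_Measure"
begin

text \<open>Two disjoint probability measures are mutually singular: disjointness gives sets
  \<open>C n\<close> with \<open>\<mu>(C n) + \<nu>(X - C n) < 2^-n\<close>, and by Borel--Cantelli \<open>limsup C\<close> is
  \<open>\<mu>\<close>-null and \<open>\<nu>\<close>-conull. For finitely many pairwise singular measures, intersecting the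
  separating sets and removing overlaps yields pairwise disjoint sets \<open>D i\<close> carrying \<open>\<mu> i\<close>.
  Finally \<open>\<integral> p(x, D (i+1)) d\<mu> i = \<mu> (i+1) (D (i+1)) = 1\<close> together with \<open>p \<le> 1\<close> forces
  \<open>p(x, D (i+1)) = 1\<close> for \<open>\<mu> i\<close>-almost every \<open>x\<close>.\<close>

lemma S_ca_iff_prob_space: "\<mu> \<in> S_ca M \<longleftrightarrow> prob_space \<mu> \<and> sets \<mu> = sets M"
  unfolding S_ca_def using prob_space.emeasure_space_1 prob_spaceI by blast

lemma singular_if_meas_inf_zero:
  assumes sets_\<mu>: "sets \<mu> = sets M" and sets_\<nu>: "sets \<nu> = sets M"
    and "finite_measure \<mu>" "finite_measure \<nu>"
    and "meas_inf M \<mu> \<nu> (space M) = 0"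
  shows "\<exists>C\<in>sets M. (AE x in \<mu>. x \<notin> C) \<and> (AE x in \<nu>. x \<in> C)"
proof -
  let ?cost = "\<lambda>C. measure \<mu> C + measure \<nu> (space M - C)"
  let ?S = "{C\<in>sets M. C \<subseteq> space M}"
  have "\<exists>C\<in>?S. ?cost C < (1/2)^n" for n :: nat
  proof -
    have "bdd_below (?cost ` ?S)" by (intro bdd_belowI[of _ 0]) auto
    moreover have "(INF C\<in>?S. ?cost C) < (1/2)^n"
      using assms(5) unfolding meas_inf_def by simp
    ultimately show ?thesis by (subst (asm) cINF_less_iff) auto
  qed
  then obtain C where C_sets: "\<And>n. C n \<in> sets M" and C_cost: "\<And>n. ?cost (C n) < (1/2)^n"
    by (metis (no_types, lifting) mem_Collect_eq)
  have \<mu>_C: "measure \<mu> (C n) \<le> (1/2)^n" and \<nu>_C: "measure \<nu> (space M - C n) \<le> (1/2)^n" for n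
    using C_cost[of n] measure_nonneg[of \<mu> "C n"] measure_nonneg[of \<nu> "space M - C n"] by linarith+
  have summable_geom: "summable (\<lambda>n. (1/2::real)^n)" by (simp add: summable_geometric)
  txt \<open>Borel--Cantelli applies to both sequences, and a point outside \<open>limsup C\<close>
    lies in infinitely many of the complements \<open>space M - C n\<close>.\<close>
  have "limsup C \<in> null_sets \<mu>"
  proof (rule borel_cantelli_limsup1)
    show "summable (\<lambda>n. measure \<mu> (C n))"
      using \<mu>_C by (intro summable_comparison_test'[OF summable_geom]) simp
  qed (use C_sets sets_\<mu> assms(3) in \<open>auto simp: finite_measure.emeasure_finite less_top[symmetric]\<close>)
  moreover have "limsup (\<lambda>n. space M - C n) \<in> null_sets \<nu>"
  proof (rule borel_cantelli_limsup1)
    show "summable (\<lambda>n. measure \<nu> (space M - C n))"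
      using \<nu>_C by (intro summable_comparison_test'[OF summable_geom]) simp
  qed (use C_sets sets_\<nu> assms(4) in \<open>auto simp: finite_measure.emeasure_finite less_top[symmetric]\<close>)
  moreover have "space M - limsup C \<subseteq> limsup (\<lambda>n. space M - C n)"
    unfolding limsup_INF_SUP by (auto, metis atLeast_iff max.cobounded1 max.cobounded2)
  moreover have "limsup C \<in> sets M"
    using C_sets by (rule measurable_limsup)
  ultimately show ?thesis
    using sets_eq_imp_space_eq[OF sets_\<nu>]
    by (intro bexI[of _ "limsup C"] conjI AE_not_in AE_I'[of "limsup (\<lambda>n. space M - C n)"]) auto
qed

lemma disjoint_supports_if_pairwise_singular:
  fixes \<mu> :: "'i \<Rightarrow> 'a measure"
  assumes "finite I" and sets_\<mu>: "\<And>i. i \<in> I \<Longrightarrow> sets (\<mu> i) = sets M"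
    and singular: "\<And>i j. i \<in> I \<Longrightarrow> j \<in> I \<Longrightarrow> i \<noteq> j \<Longrightarrow>
      \<exists>C\<in>sets M. (AE x in \<mu> i. x \<notin> C) \<and> (AE x in \<mu> j. x \<in> C)"
  obtains D where "\<And>i. i \<in> I \<Longrightarrow> D i \<in> sets M" and "\<And>i. i \<in> I \<Longrightarrow> AE x in \<mu> i. x \<in> D i"
    and "\<And>i j. i \<in> I \<Longrightarrow> j \<in> I \<Longrightarrow> i \<noteq> j \<Longrightarrow> D i \<inter> D j = {}"
proof -
  obtain C where C_sets: "\<And>i j. i \<in> I \<Longrightarrow> j \<in> I \<Longrightarrow> i \<noteq> j \<Longrightarrow> C i j \<in> sets M"
    and C_AE: "\<And>i j. i \<in> I \<Longrightarrow> j \<in> I \<Longrightarrow> i \<noteq> j \<Longrightarrow>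
      (AE x in \<mu> i. x \<notin> C i j) \<and> (AE x in \<mu> j. x \<in> C i j)"
    using singular by metis
  define E where "E j = {x\<in>space M. \<forall>i\<in>I-{j}. x \<in> C i j}" for j
  define D where "D j = E j - (\<Union>k\<in>I-{j}. E k)" for j
  have E_sets: "E j \<in> sets M" if "j \<in> I" for j
  proof -
    have "E j = space M \<inter> (\<Inter>i\<in>I-{j}. C i j)" unfolding E_def by auto
    also have "\<dots> \<in> sets M"
      using C_sets that \<open>finite I\<close> by (cases "I - {j} = {}") auto
    finally show ?thesis .
  qed
  have "D j \<in> sets M" if "j \<in> I" for j
    unfolding D_def using E_sets that \<open>finite I\<close> by auto
  moreover have "AE x in \<mu> j. x \<in> D j" if "j \<in> I" for j
  proof -
    have "AE x in \<mu> j. x \<in> E j"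
      using AE_space[of "\<mu> j"] AE_finite_allI[OF \<open>finite I\<close>, of "\<lambda>i x. i \<in> I-{j} \<longrightarrow> x \<in> C i j" "\<mu> j"]
        C_AE sets_eq_imp_space_eq[OF sets_\<mu>[OF that]] that
      unfolding E_def by (auto elim!: eventually_elim2)
    moreover have "AE x in \<mu> j. \<forall>k\<in>I-{j}. x \<notin> E k"
    proof (rule AE_finite_allI)
      fix k assume k: "k \<in> I - {j}"
      then have "AE x in \<mu> j. x \<notin> C j k" using C_AE that by blast
      then show "AE x in \<mu> j. x \<notin> E k" using k that unfolding E_def by (auto elim!: eventually_mono)
    qed (use \<open>finite I\<close> in simp)
    ultimately show "AE x in \<mu> j. x \<in> D j" unfolding D_def by eventually_elim auto
  qed
  moreover have "D i \<inter> D j = {}" if "i \<in> I" "j \<in> I" "i \<noteq> j" for i j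
    unfolding D_def using that by blast
  ultimately show thesis by (rule that)
qed

lemma separating_sets_if_pairwise_meas_disjoint:
  fixes \<mu> :: "'i \<Rightarrow> 'a measure"
  assumes "finite I" and prob: "\<And>i. i \<in> I \<Longrightarrow> prob_space (\<mu> i)"
    and sets_\<mu>: "\<And>i. i \<in> I \<Longrightarrow> sets (\<mu> i) = sets M"
    and disjoint: "\<And>i j. i \<in> I \<Longrightarrow> j \<in> I \<Longrightarrow> i \<noteq> j \<Longrightarrow> meas_disjoint M (\<mu> i) (\<mu> j)"
  obtains D where "\<And>i. i \<in> I \<Longrightarrow> D i \<in> sets M"
    and "\<And>i j. i \<in> I \<Longrightarrow> j \<in> I \<Longrightarrow> i \<noteq> j \<Longrightarrow> D i \<inter> D j = {}"
    and "\<And>i j. i \<in> I \<Longrightarrow> j \<in> I \<Longrightarrow> measure (\<mu> i) (D j) = (if i = j then 1 else 0)"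
proof -
  have singular: "\<exists>C\<in>sets M. (AE x in \<mu> i. x \<notin> C) \<and> (AE x in \<mu> j. x \<in> C)"
    if "i \<in> I" "j \<in> I" "i \<noteq> j" for i j
  proof (rule singular_if_meas_inf_zero)
    show "meas_inf M (\<mu> i) (\<mu> j) (space M) = 0"
      using disjoint[OF that] unfolding meas_disjoint_def by blast
  qed (use that prob sets_\<mu> in \<open>auto simp: prob_space_def\<close>)
  obtain D where D_sets: "\<And>i. i \<in> I \<Longrightarrow> D i \<in> sets M"
    and D_AE: "\<And>i. i \<in> I \<Longrightarrow> AE x in \<mu> i. x \<in> D i"
    and D_disjoint: "\<And>i j. i \<in> I \<Longrightarrow> j \<in> I \<Longrightarrow> i \<noteq> j \<Longrightarrow> D i \<inter> D j = {}"
  proof (rule disjoint_supports_if_pairwise_singular[of I \<mu> M])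
    show "\<exists>C\<in>sets M. (AE x in \<mu> i. x \<notin> C) \<and> (AE x in \<mu> j. x \<in> C)"
      if "i \<in> I" "j \<in> I" "i \<noteq> j" for i j
      using that by (rule singular)
  qed (use \<open>finite I\<close> sets_\<mu> that in auto)
  have "measure (\<mu> i) (D j) = (if i = j then 1 else 0)" if "i \<in> I" "j \<in> I" for i j
  proof -
    interpret prob_space "\<mu> i" using prob that(1) by blast
    have D_event: "D j \<in> events" using D_sets sets_\<mu> that by simp
    show ?thesis
    proof (cases "i = j")
      case True
      then show ?thesis using D_AE[OF that(1)] prob_eq_1[OF D_event] by simp
    next
      case False
      have "AE x in \<mu> i. x \<notin> D j"
        using D_AE[OF that(1)] D_disjoint[OF that False] by (auto elim!: eventually_mono)
      then show ?thesis using False prob_eq_0[OF D_event] by simp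
    qed
  qed
  with D_sets D_disjoint show thesis by (rule that)
qed

lemma (in prob_space) AE_eq_1_if_integral_eq_1:
  fixes f :: "'a \<Rightarrow> real"
  assumes "integrable M f" and "AE x in M. f x \<le> 1" and "(\<integral>x. f x \<partial>M) = 1"
  shows "AE x in M. f x = 1"
proof -
  have "integrable M (\<lambda>x. 1 - f x)" using assms(1) by simp
  moreover have "(\<integral>x. 1 - f x \<partial>M) = 0"
    using assms(1,3) by (simp add: prob_space)
  ultimately have "AE x in M. 1 - f x = 0"
    using assms(2) integral_nonneg_eq_0_iff_AE[of M "\<lambda>x. 1 - f x"] by (auto elim!: eventually_mono)
  then show ?thesis by (auto elim!: eventually_mono)
qed

lemma AE_transition_eq_1_if_markov_op_eq_1:
  assumes "transition_function M p" and "prob_space N" and sets_N: "sets N = sets M"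
    and "E \<in> sets M" and "markov_op p N E = 1"
  shows "AE x in N. p x E = 1"
proof -
  interpret N: prob_space N by fact
  have bounded: "0 \<le> p x E \<and> p x E \<le> 1" if "x \<in> space N" for x
    using assms(1,4) that sets_eq_imp_space_eq[OF sets_N] unfolding transition_function_def by auto
  have "(\<lambda>x. p x E) \<in> borel_measurable M"
    using assms(1,4) unfolding transition_function_def by auto
  then have "(\<lambda>x. p x E) \<in> borel_measurable N"
    by (simp add: measurable_cong_sets[OF sets_N refl])
  then have "integrable N (\<lambda>x. p x E)"
    using bounded by (intro N.integrable_const_bound[of _ 1]) auto
  then show ?thesis
    using bounded assms(5) unfolding markov_op_def by (intro N.AE_eq_1_if_integral_eq_1) auto
qed

theorem theorem4p6:
  fixes M :: "'a measure" and p :: "'a \<Rightarrow> 'a set \<Rightarrow> real"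
    and m :: nat and \<mu> :: "nat \<Rightarrow> 'a measure"
  assumes "standing_space M"
    and "transition_function M p"
    and "is_disjoint_cycle M p m \<mu>"
  shows "\<exists>D :: nat \<Rightarrow> 'a set.
    (\<forall>i\<in>{1..m}. D i \<in> sets M) \<and>
    (\<forall>i\<in>{1..m}. \<forall>j\<in>{1..m}. i \<noteq> j \<longrightarrow> D i \<inter> D j = {}) \<and>
    (\<forall>i\<in>{1..m}. \<forall>j\<in>{1..m}. measure (\<mu> i) (D j) = (if i = j then 1 else 0)) \<and>
    (\<forall>i\<in>{1..m}. AE x in \<mu> i. x \<in> D i \<longrightarrow> p x (D (cyc_next m i)) = 1)"
proof -
  have cycle: "is_cycle M p m \<mu>"
    and disjoint: "\<And>i j. i \<in> {1..m} \<Longrightarrow> j \<in> {1..m} \<Longrightarrow> i \<noteq> j \<Longrightarrow> meas_disjoint M (\<mu> i) (\<mu> j)"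
    using assms(3) unfolding is_disjoint_cycle_def by auto
  have prob: "prob_space (\<mu> i)" and sets_\<mu>: "sets (\<mu> i) = sets M" if "i \<in> {1..m}" for i
    using cycle that unfolding is_cycle_def S_ca_iff_prob_space by auto
  obtain D where D_sets: "\<And>i. i \<in> {1..m} \<Longrightarrow> D i \<in> sets M"
    and D_disjoint: "\<And>i j. i \<in> {1..m} \<Longrightarrow> j \<in> {1..m} \<Longrightarrow> i \<noteq> j \<Longrightarrow> D i \<inter> D j = {}"
    and D_measure: "\<And>i j. i \<in> {1..m} \<Longrightarrow> j \<in> {1..m} \<Longrightarrow>
      measure (\<mu> i) (D j) = (if i = j then 1 else 0)"
    using separating_sets_if_pairwise_meas_disjoint[of "{1..m}" \<mu> M] prob sets_\<mu> disjoint by auto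
  have D_next: "AE x in \<mu> i. p x (D (cyc_next m i)) = 1" if i: "i \<in> {1..m}" for i
  proof (rule AE_transition_eq_1_if_markov_op_eq_1[OF assms(2) prob[OF i] sets_\<mu>[OF i]])
    have next_i: "cyc_next m i \<in> {1..m}" using i unfolding cyc_next_def by auto
    then show "D (cyc_next m i) \<in> sets M" by (rule D_sets)
    show "markov_op p (\<mu> i) (D (cyc_next m i)) = 1"
      using cycle i D_sets[OF next_i] D_measure[OF next_i next_i] unfolding is_cycle_def by auto
  qed
  show ?thesis
  proof (intro exI[of _ D] conjI ballI impI)
    show "AE x in \<mu> i. x \<in> D i \<longrightarrow> p x (D (cyc_next m i)) = 1" if "i \<in> {1..m}" for i
      using D_next[OF that] by (rule eventually_mono) simp
  qed (simp_all add: D_sets D_disjoint D_measure)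
qed

end
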